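(* Let $Q$ be a countable set, $(F_i)_{i\in I}$ a family of real-valued maps on $Q$ and $(k_i)_{i\in I}$ a bounded family of nonnegative real numbers such that $\sum_{t\in S}|F_i(t)|\le k_i\mod c_0(I)$ for every finite subset $S$ of $Q$. Then $(F_i)_{i\in I}$ is of type $c_0\ell_1$ bounded by $(k_i)_{i\in I}$.
   Context: $c_0(I)$ is the set of real families $(a_i)_{i\in I}$ with $\{i:|a_i|\ge\varepsilon\}$ finite for all $\varepsilon>0$ (written $\lim_{i\in I}a_i=0$). "$x_i\le y_i\mod c_0(I)$" means there is $(z_i)\in c_0(I)$ with $x_i\le y_i+z_i$ for all $i$, i.e. $\{i:x_i\ge y_i+\varepsilon\}$ is finite for every $\varepsilon>0$. $(F_i)_{i\in I}$ is of type $c_0\ell_1$ bounded by $(k_i)$ if $F_i(t)=a_{i,t}+b_{i,t}$ for $i\in I$, $t\in Q$, with $\lim_{i\in I}a_{i,t}=0$ for each $t\in Q$ and $\sum_{t\in Q}|b_{i,t}|\le k_i$ for each $i\in I$. *)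

theory Defs
  imports "HOL-Analysis.Analysis"
begin

definition c0_lim :: "'i set \<Rightarrow> ('i \<Rightarrow> real) \<Rightarrow> bool" where
  "c0_lim I a \<longleftrightarrow> (\<forall>\<epsilon>>0. finite {i\<in>I. \<epsilon> \<le> \<bar>a i\<bar>})"

definition le_mod_c0 :: "'i set \<Rightarrow> ('i \<Rightarrow> real) \<Rightarrow> ('i \<Rightarrow> real) \<Rightarrow> bool" where
  "le_mod_c0 I x y \<longleftrightarrow> (\<exists>z. c0_lim I z \<and> (\<forall>i\<in>I. x i \<le> y i + z i))"

definition c0l1_bounded ::
  "'i set \<Rightarrow> 'q set \<Rightarrow> ('i \<Rightarrow> 'q \<Rightarrow> real) \<Rightarrow> ('i \<Rightarrow> real) \<Rightarrow> bool" where
  "c0l1_bounded I Q F k \<longleftrightarrow>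
     (\<exists>a b. (\<forall>i\<in>I. \<forall>t\<in>Q. F i t = a i t + b i t)
          \<and> (\<forall>t\<in>Q. c0_lim I (\<lambda>i. a i t))
          \<and> (\<forall>i\<in>I. (\<lambda>t. \<bar>b i t\<bar>) summable_on Q \<and> (\<Sum>\<^sub>\<infinity>t\<in>Q. \<bar>b i t\<bar>) \<le> k i))"

end

theory Submission
  imports Defs
begin

text \<open>Enumerate Q injectively by N and split each row greedily: b i t is F i t clipped to
  the part of k i not yet consumed by the values \<bar>F i s\<bar> of the points s enumerated
  before t. The finite sums of \<bar>b i\<bar> then never exceed k i, and the remainder
  \<bar>F i t - b i t\<bar> is at most the excess of the finite sum of \<bar>F i s\<bar> over
  N s \<le> N t above k i, which tends to 0 by hypothesis.\<close>

lemma c0_lim_abs_le: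
  assumes "c0_lim I z" and "\<And>i. i \<in> I \<Longrightarrow> \<bar>a i\<bar> \<le> \<bar>z i\<bar>"
  shows "c0_lim I a"
  unfolding c0_lim_def
proof (intro allI impI)
  fix \<epsilon> :: real assume "\<epsilon> > 0"
  then have "finite {i\<in>I. \<epsilon> \<le> \<bar>z i\<bar>}" using assms(1) by (simp add: c0_lim_def)
  moreover have "{i\<in>I. \<epsilon> \<le> \<bar>a i\<bar>} \<subseteq> {i\<in>I. \<epsilon> \<le> \<bar>z i\<bar>}" using assms(2) by force
  ultimately show "finite {i\<in>I. \<epsilon> \<le> \<bar>a i\<bar>}" by (rule finite_subset[rotated])
qed

lemma le_mod_c0_imp_c0_lim_excess:
  assumes "le_mod_c0 I x y"
  shows "c0_lim I (\<lambda>i. max 0 (x i - y i))"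
proof -
  obtain z where z: "c0_lim I z" and le: "\<forall>i\<in>I. x i \<le> y i + z i"
    using assms by (auto simp: le_mod_c0_def)
  show ?thesis by (rule c0_lim_abs_le[OF z]) (use le in auto)
qed

lemma nonneg_summable_on_infsum_le:
  fixes f :: "'a \<Rightarrow> real"
  assumes "\<And>x. x \<in> A \<Longrightarrow> 0 \<le> f x" and "\<And>F. finite F \<Longrightarrow> F \<subseteq> A \<Longrightarrow> sum f F \<le> K"
  shows "f summable_on A \<and> infsum f A \<le> K"
proof -
  have "f summable_on A"
    by (rule nonneg_bdd_above_summable_on) (use assms in \<open>auto simp: bdd_above_def\<close>)
  with assms(2) show ?thesis using infsum_le_finite_sums by blast
qed

definition clip :: "real \<Rightarrow> real \<Rightarrow> real" where
  "clip r x = max (- r) (min r x)"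

lemma abs_clip: "0 \<le> r \<Longrightarrow> \<bar>clip r x\<bar> = min \<bar>x\<bar> r"
  by (auto simp: clip_def)

lemma abs_diff_clip: "0 \<le> r \<Longrightarrow> \<bar>x - clip r x\<bar> = max 0 (\<bar>x\<bar> - r)"
  by (auto simp: clip_def)

definition budget :: "real \<Rightarrow> (nat \<Rightarrow> real) \<Rightarrow> nat \<Rightarrow> real" where
  "budget k g m = max 0 (k - (\<Sum>j<m. g j))"

lemma sum_min_budget:
  assumes "\<And>m. 0 \<le> g m" and "0 \<le> k"
  shows "(\<Sum>m<n. min (g m) (budget k g m)) = min k (\<Sum>m<n. g m)"
proof (induction n)
  case 0
  then show ?case using assms(2) by simp
next
  case (Suc n)
  have "0 \<le> (\<Sum>m<n. g m)" using assms(1) by (simp add: sum_nonneg)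
  with Suc assms(1)[of n] show ?case by (simp add: budget_def min_def max_def)
qed

text \<open>For N injective on Q this is f transported to the indices N ` Q, and 0 elsewhere.\<close>
definition enum_seq :: "('q \<Rightarrow> nat) \<Rightarrow> 'q set \<Rightarrow> ('q \<Rightarrow> real) \<Rightarrow> nat \<Rightarrow> real" where
  "enum_seq N Q f m = (\<Sum>s | s \<in> Q \<and> N s = m. f s)"

lemma enum_seq_apply:
  assumes "inj_on N Q" and "t \<in> Q"
  shows "enum_seq N Q f (N t) = f t"
proof -
  have "{s. s \<in> Q \<and> N s = N t} = {t}" using assms by (auto dest: inj_onD)
  then show ?thesis by (simp add: enum_seq_def)
qed

lemma finite_enumerated_lessThan:
  fixes N :: "'q \<Rightarrow> nat"
  shows "inj_on N Q \<Longrightarrow> finite {s. s \<in> Q \<and> N s < n}"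
  using finite_vimage_IntI[of "{..<n}" N Q] by (simp add: vimage_def Int_def conj_commute)

lemma sum_enum_seq_lessThan:
  assumes "inj_on N Q"
  shows "(\<Sum>j<n. enum_seq N Q f j) = (\<Sum>s | s \<in> Q \<and> N s < n. f s)"
proof -
  have "(\<Sum>s | s \<in> Q \<and> N s < n. f s)
      = (\<Sum>j<n. \<Sum>s | s \<in> {s. s \<in> Q \<and> N s < n} \<and> N s = j. f s)"
    by (rule sum.group[symmetric]) (use finite_enumerated_lessThan[OF assms] in auto)
  also have "\<dots> = (\<Sum>j<n. enum_seq N Q f j)"
    by (intro sum.cong) (auto simp: enum_seq_def intro: sum.cong)
  finally show ?thesis by simp
qed

definition greedy_part :: "('q \<Rightarrow> nat) \<Rightarrow> 'q set \<Rightarrow> real \<Rightarrow> ('q \<Rightarrow> real) \<Rightarrow> 'q \<Rightarrow> real" where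
  "greedy_part N Q k f t = clip (budget k (enum_seq N Q (\<lambda>s. \<bar>f s\<bar>)) (N t)) (f t)"

lemma sum_abs_greedy_part_le:
  assumes "inj_on N Q" and "0 \<le> k" and "finite T" and "T \<subseteq> Q"
  shows "(\<Sum>t\<in>T. \<bar>greedy_part N Q k f t\<bar>) \<le> k"
proof -
  let ?g = "enum_seq N Q (\<lambda>s. \<bar>f s\<bar>)"
  let ?c = "\<lambda>m. min (?g m) (budget k ?g m)"
  have g_nonneg: "0 \<le> ?g m" for m by (simp add: enum_seq_def sum_nonneg)
  have inj: "inj_on N T" using assms(1,4) by (rule inj_on_subset)
  obtain n where n: "N ` T \<subseteq> {..<n}"
    using assms(3) by (meson finite_imageI finite_nat_iff_bounded)
  have "(\<Sum>t\<in>T. \<bar>greedy_part N Q k f t\<bar>) = (\<Sum>t\<in>T. ?c (N t))"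
    using assms(1,4) by (intro sum.cong) (auto simp: greedy_part_def abs_clip budget_def enum_seq_apply)
  also have "\<dots> = (\<Sum>j\<in>N ` T. ?c j)" by (simp add: sum.reindex[OF inj])
  also have "\<dots> \<le> (\<Sum>j<n. ?c j)"
    by (rule sum_mono2) (use n g_nonneg in \<open>auto simp: budget_def\<close>)
  also have "\<dots> = min k (\<Sum>j<n. ?g j)" using g_nonneg assms(2) by (rule sum_min_budget)
  also have "\<dots> \<le> k" by simp
  finally show ?thesis .
qed

lemma abs_sub_greedy_part_le:
  assumes "inj_on N Q" and "t \<in> Q"
  shows "\<bar>f t - greedy_part N Q k f t\<bar> \<le> max 0 ((\<Sum>s | s \<in> Q \<and> N s \<le> N t. \<bar>f s\<bar>) - k)"
proof -
  let ?before = "{s. s \<in> Q \<and> N s < N t}"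
  have "{s. s \<in> Q \<and> N s \<le> N t} = insert t ?before"
    using assms by (auto simp: le_less dest: inj_onD)
  then have "(\<Sum>s | s \<in> Q \<and> N s \<le> N t. \<bar>f s\<bar>) = \<bar>f t\<bar> + (\<Sum>s\<in>?before. \<bar>f s\<bar>)"
    using finite_enumerated_lessThan[OF assms(1)] by simp
  moreover have "\<bar>f t - greedy_part N Q k f t\<bar>
      = max 0 (\<bar>f t\<bar> - max 0 (k - (\<Sum>s\<in>?before. \<bar>f s\<bar>)))"
    by (simp add: greedy_part_def abs_diff_clip budget_def sum_enum_seq_lessThan[OF assms(1)])
  ultimately show ?thesis by linarith
qed

theorem proposition2p11:
  fixes I :: "'i set" and Q :: "'q set"
    and F :: "'i \<Rightarrow> 'q \<Rightarrow> real" and k :: "'i \<Rightarrow> real"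
  assumes "countable Q"
    and "\<exists>M. \<forall>i\<in>I. \<bar>k i\<bar> \<le> M"
    and "\<forall>i\<in>I. 0 \<le> k i"
    and "\<And>S. finite S \<Longrightarrow> S \<subseteq> Q \<Longrightarrow> le_mod_c0 I (\<lambda>i. \<Sum>t\<in>S. \<bar>F i t\<bar>) k"
  shows "c0l1_bounded I Q F k"
proof -
  define N where "N = to_nat_on Q"
  have inj: "inj_on N Q" unfolding N_def using assms(1) by (rule inj_on_to_nat_on)
  define b where "b i = greedy_part N Q (k i) (F i)" for i
  have c0: "c0_lim I (\<lambda>i. F i t - b i t)" if "t \<in> Q" for t
  proof -
    let ?S = "{s. s \<in> Q \<and> N s \<le> N t}"
    have "finite ?S" using finite_enumerated_lessThan[OF inj, of "Suc (N t)"] by (simp add: less_Suc_eq_le)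
    then have "c0_lim I (\<lambda>i. max 0 ((\<Sum>s\<in>?S. \<bar>F i s\<bar>) - k i))"
      using assms(4) by (intro le_mod_c0_imp_c0_lim_excess) auto
    then show ?thesis
      by (rule c0_lim_abs_le) (use abs_sub_greedy_part_le[OF inj that] in \<open>force simp: b_def\<close>)
  qed
  have l1: "(\<lambda>t. \<bar>b i t\<bar>) summable_on Q \<and> (\<Sum>\<^sub>\<infinity>t\<in>Q. \<bar>b i t\<bar>) \<le> k i" if "i \<in> I" for i
    using sum_abs_greedy_part_le[OF inj] assms(3) that
    by (intro nonneg_summable_on_infsum_le) (auto simp: b_def)
  show ?thesis unfolding c0l1_bounded_def
    by (rule exI[of _ "\<lambda>i t. F i t - b i t"], rule exI[of _ b]) (use c0 l1 in auto)
qed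

end
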